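(* Let $\bm\sigma=\sigma_1\bm e_1+\dots+\sigma_r\bm e_r\in\mathbb{Z}^r$ be a changemaker vector with non-trivial stable coefficients (i.e. $\sigma_r\ge2$), and let $L=\langle\bm\sigma\rangle^\perp\subseteq\mathbb{Z}^r$. If $L$ admits an obtuse superbase, then $L$ admits an obtuse superbase $B$ (possibly after permuting basis vectors $\bm e_i$ with equal coefficients $\sigma_i$) such that $-\bm e_k+\bm e_{k-1}\in B$ for every $k$ with $\sigma_k=\sigma_{k-1}$.
   Context: $\mathbb{Z}^r$ has the standard pairing. A changemaker vector is $\bm\sigma=\sum\sigma_i\bm e_i$ (in some orthonormal basis) with $\sigma_1=1$ and $\sigma_{i-1}\le\sigma_i\le1+\sigma_1+\dots+\sigma_{i-1}$; its stable coefficients are the $\sigma_i\ge2$. An obtuse superbase of a rank-$k$ lattice $L$ is a spanning set $\{v_0,\dots,v_k\}$ with $v_i\cdot v_j\le0$ for $i\ne j$ and $\sum v_i=0$. *)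

theory Defs
  imports "HOL-Combinatorics.Permutations"
begin

text \<open>Vectors of Z^r are represented as functions nat => int supported on {1..r};
 the standard basis vector e_i is the indicator of i.\<close>

definition zvec :: "nat \<Rightarrow> (nat \<Rightarrow> int) \<Rightarrow> bool" where
  "zvec r v \<longleftrightarrow> (\<forall>i. i \<notin> {1..r} \<longrightarrow> v i = 0)"

definition pair :: "nat \<Rightarrow> (nat \<Rightarrow> int) \<Rightarrow> (nat \<Rightarrow> int) \<Rightarrow> int" where
  "pair r u v = (\<Sum>i=1..r. u i * v i)"

definition basis_vec :: "nat \<Rightarrow> (nat \<Rightarrow> int)" where
  "basis_vec k = (\<lambda>j. if j = k then 1 else 0)"

definition changemaker :: "nat \<Rightarrow> (nat \<Rightarrow> int) \<Rightarrow> bool" where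
  "changemaker r \<sigma> \<longleftrightarrow> zvec r \<sigma> \<and> 1 \<le> r \<and> \<sigma> 1 = 1 \<and>
     (\<forall>i\<in>{2..r}. \<sigma> (i - 1) \<le> \<sigma> i \<and> \<sigma> i \<le> 1 + (\<Sum>j=1..i-1. \<sigma> j))"

definition perp_lattice :: "nat \<Rightarrow> (nat \<Rightarrow> int) \<Rightarrow> (nat \<Rightarrow> int) set" where
  "perp_lattice r \<sigma> = {v. zvec r v \<and> pair r \<sigma> v = 0}"

definition int_span :: "(nat \<Rightarrow> int) set \<Rightarrow> (nat \<Rightarrow> int) set" where
  "int_span V = {x. \<exists>F c. finite F \<and> F \<subseteq> V \<and> x = (\<lambda>j. \<Sum>v\<in>F. c v * v j)}"

definition int_indep :: "(nat \<Rightarrow> int) set \<Rightarrow> bool" where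
  "int_indep V \<longleftrightarrow> finite V \<and>
     (\<forall>c. (\<lambda>j. \<Sum>v\<in>V. c v * v j) = (\<lambda>j. 0) \<longrightarrow> (\<forall>v\<in>V. c v = 0))"

definition lattice_rank :: "(nat \<Rightarrow> int) set \<Rightarrow> nat \<Rightarrow> bool" where
  "lattice_rank L k \<longleftrightarrow> (\<exists>V\<subseteq>L. int_indep V \<and> card V = k) \<and>
     (\<forall>V\<subseteq>L. int_indep V \<longrightarrow> card V \<le> k)"

definition obtuse_superbase :: "nat \<Rightarrow> (nat \<Rightarrow> int) set \<Rightarrow> (nat \<Rightarrow> int) set \<Rightarrow> bool" where
  "obtuse_superbase r L B \<longleftrightarrow> finite B \<and> card B \<ge> 1 \<and> lattice_rank L (card B - 1) \<and>
     int_span B = L \<and>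
     (\<forall>u\<in>B. \<forall>v\<in>B. u \<noteq> v \<longrightarrow> pair r u v \<le> 0) \<and>
     (\<lambda>j. \<Sum>v\<in>B. v j) = (\<lambda>j. 0)"

end

(*
  The lattice L = sigma^perp contains no vector of norm 1, because no coefficient of sigma
  vanishes; so the roots e_(k-1) - e_k with sigma_k = sigma_(k-1) have minimal norm 2.
  In a lattice of minimum 2, a vector x of norm 2 is the sum of a subset T of any obtuse
  superbase B: write x in B, subtract the indicator of the set where the coefficients are
  maximal, and compare norms. The products <x, u> for u in T are then nonnegative integers
  with sum 2, and for either pattern (2 or 1 + 1) an explicit exchange of two or three vectors
  of B produces an obtuse superbase containing x. The exchanged vectors can be chosen away
  from the roots e_(j-1) - e_j, j < k, that are already in B, since x has nonzero product
  (equal to -1) with at most one of them. Adding the roots for k = 2, ..., r in turn proves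
  the theorem with the identity permutation.
*)
theory Submission
  imports Defs Complex_Main "HOL-Library.Function_Algebras"
begin

section \<open>Integer spans and ranks\<close>

lemma sum_apply: "(\<Sum>a\<in>A. f a) x = (\<Sum>a\<in>A. f a x)"
  by (induction A rule: infinite_finite_induct) auto

definition zscale :: "int \<Rightarrow> (nat \<Rightarrow> int) \<Rightarrow> nat \<Rightarrow> int" where
  "zscale c v = (\<lambda>j. c * v j)"

interpretation zmod: module zscale
  by unfold_locales (auto simp: zscale_def fun_eq_iff algebra_simps)

lemma int_span_eq_span: "int_span V = zmod.span V"
  unfolding int_span_def zmod.span_explicit
  by (auto simp: zscale_def fun_eq_iff sum_apply)

text \<open>Ranks are bounded over \<rat>, where the exchange lemma of linear algebra is available;
  integer independence survives the embedding into \<rat>-vectors by clearing denominators.\<close>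

definition qscale :: "rat \<Rightarrow> (nat \<Rightarrow> rat) \<Rightarrow> nat \<Rightarrow> rat" where
  "qscale c v = (\<lambda>j. c * v j)"

interpretation qvec: vector_space qscale
  by unfold_locales (auto simp: qscale_def fun_eq_iff algebra_simps)

definition rat_vec :: "(nat \<Rightarrow> int) \<Rightarrow> nat \<Rightarrow> rat" where
  "rat_vec v = (\<lambda>j. of_int (v j))"

lemma rat_vec_apply [simp]: "rat_vec v j = of_int (v j)"
  by (simp add: rat_vec_def)

lemma inj_rat_vec: "inj rat_vec"
  by (auto simp: inj_def rat_vec_def fun_eq_iff)

lemma rat_vec_span:
  assumes "v \<in> zmod.span S"
  shows "rat_vec v \<in> qvec.span (rat_vec ` S)"
  using assms
proof (induction rule: zmod.span_induct_alt)
  case base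
  show ?case using qvec.span_zero by (simp add: rat_vec_def zero_fun_def)
next
  case (step c x y)
  have "rat_vec (zscale c x + y) = qscale (of_int c) (rat_vec x) + rat_vec y"
    by (simp add: rat_vec_def qscale_def zscale_def fun_eq_iff)
  moreover have "rat_vec x \<in> rat_vec ` S" using step(1) by simp
  ultimately show ?case
    by (metis step(2) qvec.span_add qvec.span_scale qvec.span_base)
qed

lemma common_denominator:
  assumes "finite A"
  shows "\<exists>N::int. N \<noteq> 0 \<and> (\<forall>a\<in>A. of_int N * (a::rat) \<in> \<int>)"
  using assms
proof (induction A rule: finite_induct)
  case empty
  show ?case by (intro exI[of _ 1]) auto
next
  case (insert a A)
  then obtain N where N: "N \<noteq> 0" "\<forall>b\<in>A. of_int N * b \<in> \<int>" by auto
  obtain p q where pq: "quotient_of a = (p, q)" by fastforce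
  have q: "q > 0" and a: "a = of_int p / of_int q"
    using quotient_of_denom_pos[OF pq] quotient_of_div[OF pq] by auto
  have "of_int (N * q) * b \<in> \<int>" if "b \<in> insert a A" for b
  proof (cases "b = a")
    case True
    then have "of_int (N * q) * b = of_int (N * p)" using q a by simp
    then show ?thesis by (metis Ints_of_int)
  next
    case False
    then have "of_int q * (of_int N * b) \<in> \<int>" using N that by simp
    then show ?thesis by (simp add: ac_simps)
  qed
  then show ?case using N q by (intro exI[of _ "N * q"]) auto
qed

lemma independent_rat_vec:
  assumes "int_indep V"
  shows "qvec.independent (rat_vec ` V)"
proof
  have fin: "finite V" using assms by (simp add: int_indep_def)
  have inj: "inj_on rat_vec V" using inj_rat_vec by (simp add: inj_on_def inj_def)
  assume "qvec.dependent (rat_vec ` V)"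
  then obtain u where u: "\<exists>w\<in>rat_vec ` V. u w \<noteq> 0"
    and rel: "(\<Sum>w\<in>rat_vec ` V. qscale (u w) w) = 0"
    using qvec.dependent_finite fin by blast
  obtain N where N: "N \<noteq> 0" "\<forall>a\<in>(\<lambda>v. u (rat_vec v)) ` V. of_int N * a \<in> \<int>"
    using common_denominator[of "(\<lambda>v. u (rat_vec v)) ` V"] fin by auto
  define e where "e v = (SOME k. of_int k = of_int N * u (rat_vec v))" for v
  have e: "of_int (e v) = of_int N * u (rat_vec v)" if "v \<in> V" for v
  proof -
    have "of_int N * u (rat_vec v) \<in> \<int>" using N that by simp
    then obtain k where "of_int N * u (rat_vec v) = of_int k" by (metis Ints_cases)
    then show ?thesis unfolding e_def by (metis (mono_tags) someI)
  qed
  have "(\<lambda>j. \<Sum>v\<in>V. e v * v j) = (\<lambda>j. 0)"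
  proof
    fix j
    have "(\<Sum>v\<in>V. u (rat_vec v) * of_int (v j)) = 0"
      using fun_cong[OF rel, of j]
      by (simp add: sum.reindex[OF inj] sum_apply qscale_def)
    moreover have "of_int (\<Sum>v\<in>V. e v * v j) =
        of_int N * (\<Sum>v\<in>V. u (rat_vec v) * of_int (v j))"
      by (simp add: e sum_distrib_left mult.assoc)
    ultimately have "(of_int (\<Sum>v\<in>V. e v * v j) :: rat) = 0" by simp
    then show "(\<Sum>v\<in>V. e v * v j) = 0" by (rule of_int_eq_0_iff[THEN iffD1])
  qed
  then have "\<forall>v\<in>V. e v = 0" using assms by (simp add: int_indep_def)
  then show False using u e N by auto
qed

lemma card_le_if_int_indep_in_span:
  assumes "finite S" "int_indep V" "V \<subseteq> zmod.span S"
  shows "card V \<le> card S"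
proof -
  have "rat_vec ` V \<subseteq> qvec.span (rat_vec ` S)" using assms(3) rat_vec_span by blast
  then have "card (rat_vec ` V) \<le> card (rat_vec ` S)"
    using qvec.independent_span_bound independent_rat_vec[OF assms(2)] assms(1) by blast
  also have "\<dots> \<le> card S" using assms(1) by (rule card_image_le)
  finally show ?thesis using card_image[of rat_vec V] inj_rat_vec by (simp add: inj_on_def inj_def)
qed

section \<open>Obtuse superbases\<close>

lemma pair_commute: "pair r u v = pair r v u"
  by (simp add: pair_def mult.commute)

lemma pair_zero_right [simp]: "pair r u 0 = 0"
  by (simp add: pair_def)

lemma pair_zero_left [simp]: "pair r 0 v = 0"
  by (simp add: pair_def)

lemma pair_add_right: "pair r u (v + w) = pair r u v + pair r u w"
  by (simp add: pair_def algebra_simps sum.distrib)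

lemma pair_diff_right: "pair r u (v - w) = pair r u v - pair r u w"
  by (simp add: pair_def algebra_simps sum_subtractf)

lemma pair_zscale_right: "pair r u (zscale c v) = c * pair r u v"
  by (simp add: pair_def zscale_def sum_distrib_left algebra_simps)

lemma pair_sum_right: "pair r u (\<Sum>a\<in>A. f a) = (\<Sum>a\<in>A. pair r u (f a))"
  unfolding pair_def sum_apply sum_distrib_left by (rule sum.swap)

lemma pair_add_left: "pair r (u + v) w = pair r u w + pair r v w"
  by (simp add: pair_def algebra_simps sum.distrib)

lemma pair_diff_left: "pair r (u - v) w = pair r u w - pair r v w"
  by (simp add: pair_def algebra_simps sum_subtractf)

lemma pair_sum_left: "pair r (\<Sum>a\<in>A. f a) v = (\<Sum>a\<in>A. pair r (f a) v)"
  using pair_sum_right[of r v f A] by (simp add: pair_commute)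

lemma obtuse_superbase_iff:
  "obtuse_superbase r L B \<longleftrightarrow> finite B \<and> B \<noteq> {} \<and> lattice_rank L (card B - 1) \<and>
     zmod.span B = L \<and> (\<forall>u\<in>B. \<forall>v\<in>B. u \<noteq> v \<longrightarrow> pair r u v \<le> 0) \<and> (\<Sum>v\<in>B. v) = 0"
proof -
  have "(\<lambda>j. \<Sum>v\<in>B. v j) = (\<Sum>v\<in>B. v)" by (simp add: fun_eq_iff sum_apply)
  then show ?thesis
    by (auto simp: obtuse_superbase_def int_span_eq_span zero_fun_def card_gt_0_iff Suc_le_eq)
qed

lemma span_Diff_zero_sum:
  assumes "finite T" "T \<subseteq> S" "u \<in> T" "(\<Sum>v\<in>T. v) = 0"
  shows "zmod.span (S - {u}) = zmod.span S"
proof -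
  have "u + (\<Sum>v\<in>T - {u}. v) = 0"
    using assms sum.remove[of T u "\<lambda>v. v"] by simp
  then have "u = - (\<Sum>v\<in>T - {u}. v)" by (simp add: eq_neg_iff_add_eq_0)
  also have "\<dots> \<in> zmod.span (S - {u})"
    using assms by (intro zmod.span_neg zmod.span_sum zmod.span_base) auto
  finally have "S \<subseteq> zmod.span (S - {u})"
    by (auto intro: zmod.span_base)
  moreover have "S - {u} \<subseteq> zmod.span S"
    by (auto intro: zmod.span_base)
  ultimately show ?thesis by (simp add: zmod.span_eq)
qed

lemma superbase_Diff_two_not_spanning:
  assumes B: "obtuse_superbase r L B" and "u \<in> B" "w \<in> B" "u \<noteq> w"
  shows "zmod.span (B - {u, w}) \<noteq> L"
proof
  assume span: "zmod.span (B - {u, w}) = L"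
  have fin: "finite B" and "lattice_rank L (card B - 1)"
    using B by (simp_all add: obtuse_superbase_iff)
  then obtain V where V: "V \<subseteq> L" "int_indep V" "card V = card B - 1"
    by (auto simp: lattice_rank_def)
  have "card V \<le> card (B - {u, w})"
    using card_le_if_int_indep_in_span[of "B - {u, w}" V] fin V span by auto
  also have "\<dots> = card B - 2" using assms fin by (simp add: card_Diff_subset)
  finally show False using V(3) card_mono[OF fin, of "{u, w}"] assms by simp
qed

lemma zero_notin_superbase:
  assumes B: "obtuse_superbase r L B" and "2 \<le> card B"
  shows "0 \<notin> B"
proof
  assume "0 \<in> B"
  have fin: "finite B" and span: "zmod.span B = L" and sum0: "(\<Sum>v\<in>B. v) = 0"
    using B by (simp_all add: obtuse_superbase_iff)
  have "\<not> B \<subseteq> {0}" using card_mono[of "{0}" B] \<open>2 \<le> card B\<close> by auto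
  then obtain w where w: "w \<in> B" "w \<noteq> 0" by blast
  have "(\<Sum>v\<in>B - {0}. v) = 0" using sum0 fin \<open>0 \<in> B\<close> by (simp add: sum_diff1)
  then have "zmod.span (B - {0} - {w}) = zmod.span (B - {0})"
    using fin w by (intro span_Diff_zero_sum[of "B - {0}"]) auto
  also have "\<dots> = L"
    using span fin \<open>0 \<in> B\<close> by (subst span_Diff_zero_sum[of "{0}"]) auto
  finally show False
    using superbase_Diff_two_not_spanning[OF B \<open>0 \<in> B\<close> w(1)] w by (metis Diff_insert2)
qed

lemma superbase_proper_subset_sum_nonzero:
  assumes B: "obtuse_superbase r L B" and T: "T \<subseteq> B" "T \<noteq> {}" "T \<noteq> B"
  shows "(\<Sum>v\<in>T. v) \<noteq> 0"
proof
  assume sumT: "(\<Sum>v\<in>T. v) = 0"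
  have fin: "finite B" and span: "zmod.span B = L" and sum0: "(\<Sum>v\<in>B. v) = 0"
    using B by (simp_all add: obtuse_superbase_iff)
  obtain t w where tw: "t \<in> T" "w \<in> B" "w \<notin> T" using T by blast
  have "zmod.span (B - {w} - {t}) = zmod.span (B - {w})"
    using T tw fin sumT by (intro span_Diff_zero_sum[of T]) (auto intro: finite_subset)
  also have "\<dots> = L" using span fin sum0 tw by (subst span_Diff_zero_sum[of B]) auto
  moreover have "B - {w} - {t} = B - {t, w}" by auto
  ultimately show False
    using superbase_Diff_two_not_spanning[OF B _ tw(2), of t] tw T by auto
qed

lemma pair_nonneg_at_max_coeff:
  assumes B: "obtuse_superbase r L B" and u: "u \<in> B" and max: "\<forall>w\<in>B. c w \<le> c u"
  shows "0 \<le> pair r u (\<Sum>w\<in>B. zscale (c w) w)"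
proof -
  have obtuse: "\<forall>v\<in>B. \<forall>w\<in>B. v \<noteq> w \<longrightarrow> pair r v w \<le> 0" and sum0: "(\<Sum>v\<in>B. v) = 0"
    using B by (simp_all add: obtuse_superbase_iff)
  have "(\<Sum>w\<in>B. pair r u w) = 0" using pair_sum_right[of r u "\<lambda>w. w" B] sum0 by simp
  then have "pair r u (\<Sum>w\<in>B. zscale (c w) w) = (\<Sum>w\<in>B. (c w - c u) * pair r u w)"
    by (simp add: pair_sum_right pair_zscale_right left_diff_distrib sum_subtractf
        sum_distrib_left[symmetric])
  also have "\<dots> \<ge> 0"
  proof (rule sum_nonneg)
    fix w assume "w \<in> B"
    show "0 \<le> (c w - c u) * pair r u w"
    proof (cases "w = u")
      case False
      then have "pair r u w \<le> 0" using obtuse u \<open>w \<in> B\<close> by auto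
      then show ?thesis using max \<open>w \<in> B\<close> by (simp add: mult_nonpos_nonpos)
    qed simp
  qed
  finally show ?thesis .
qed

lemma short_vector_is_subset_sum:
  assumes B: "obtuse_superbase r L B"
    and min2: "\<forall>v\<in>L. v \<noteq> 0 \<longrightarrow> 2 \<le> pair r v v"
    and x: "x \<in> L" "pair r x x < 4"
  shows "\<exists>T\<subseteq>B. x = (\<Sum>v\<in>T. v)"
proof -
  have fin: "finite B" and ne: "B \<noteq> {}" and span: "zmod.span B = L" and sum0: "(\<Sum>v\<in>B. v) = 0"
    using B by (simp_all add: obtuse_superbase_iff)
  obtain c where c: "x = (\<Sum>v\<in>B. zscale (c v) v)"
    using x unfolding span[symmetric] zmod.span_finite[OF fin] by blast
  define M where "M = Max (c ` B)"
  define T where "T = {v\<in>B. c v = M}"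
  have le_M: "c w \<le> M" if "w \<in> B" for w using fin that by (simp add: M_def)
  have "M \<in> c ` B" using fin ne by (simp add: M_def)
  then have "T \<noteq> {}" by (auto simp: T_def)
  show ?thesis
  proof (cases "T = B")
    case True
    then have "x = zscale M (\<Sum>v\<in>B. v)"
      unfolding c zmod.scale_sum_right by (intro sum.cong) (auto simp: T_def)
    then show ?thesis using sum0 by (intro exI[of _ "{}"]) simp
  next
    case False
    define s where "s = (\<Sum>v\<in>T. v)"
    define y where "y = x - s"
    define d where "d v = c v - (if v \<in> T then 1 else 0)" for v
    have "(\<Sum>v\<in>B. zscale (if v \<in> T then 1 else 0) v) = (\<Sum>v\<in>B. if v \<in> T then v else 0)"
      by (intro sum.cong) auto
    also have "\<dots> = s"
      using fin by (simp add: s_def sum.If_cases T_def Int_def)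
    finally have y: "y = (\<Sum>v\<in>B. zscale (d v) v)"
      by (simp add: y_def c d_def zmod.scale_left_diff_distrib sum_subtractf)
    \<comment> \<open>every vector of \<open>T\<close> still carries a maximal coefficient of \<open>y\<close>\<close>
    have "0 \<le> pair r u y" if "u \<in> T" for u
      unfolding y using that le_M
      by (intro pair_nonneg_at_max_coeff[OF B]) (auto simp: T_def d_def order.strict_iff_order)
    then have sy: "0 \<le> pair r s y" unfolding s_def pair_sum_left by (simp add: sum_nonneg)
    have "s \<in> L" unfolding s_def span[symmetric]
      by (intro zmod.span_sum zmod.span_base) (auto simp: T_def)
    moreover have "s \<noteq> 0"
      using superbase_proper_subset_sum_nonzero[OF B _ \<open>T \<noteq> {}\<close> False] by (auto simp: s_def T_def)
    ultimately have ss: "2 \<le> pair r s s" using min2 by blast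
    have "y \<in> L" using x \<open>s \<in> L\<close> span zmod.span_diff unfolding y_def by blast
    have "y = 0"
    proof (rule ccontr)
      assume "y \<noteq> 0"
      then have "2 \<le> pair r y y" using min2 \<open>y \<in> L\<close> by blast
      moreover have "pair r x x = pair r y y + 2 * pair r s y + pair r s s"
        by (simp add: y_def pair_add_left pair_add_right pair_diff_left pair_diff_right
            pair_commute[of r s x])
      ultimately show False using x sy ss by simp
    qed
    then show ?thesis by (intro exI[of _ T]) (auto simp: y_def s_def T_def)
  qed
qed

section \<open>Exchanging superbase vectors\<close>

lemma sum_nonneg_eq_1_cases:
  fixes f :: "'a \<Rightarrow> int"
  assumes "finite A" "\<forall>a\<in>A. 0 \<le> f a" "sum f A = 1"
  shows "\<exists>a\<in>A. f a = 1 \<and> (\<forall>b\<in>A - {a}. f b = 0)"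
proof -
  obtain a where a: "a \<in> A" "0 < f a"
    using assms sum_nonpos[of A f] by (metis linorder_not_le zero_less_one)
  have "f a \<le> 1" using member_le_sum[of a A f] assms a(1) by simp
  then have "f a = 1" "sum f (A - {a}) = 0"
    using a assms sum.remove[of A a f] by simp_all
  then show ?thesis
    using a(1) assms by (subst (asm) sum_nonneg_eq_0_iff) auto
qed

lemma sum_nonneg_eq_2_cases:
  fixes f :: "'a \<Rightarrow> int"
  assumes "finite A" "\<forall>a\<in>A. 0 \<le> f a" "sum f A = 2"
  shows "(\<exists>a\<in>A. f a = 2 \<and> (\<forall>b\<in>A - {a}. f b = 0)) \<or>
    (\<exists>a\<in>A. \<exists>b\<in>A. a \<noteq> b \<and> f a = 1 \<and> f b = 1 \<and> (\<forall>c\<in>A - {a, b}. f c = 0))"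
proof -
  obtain a where a: "a \<in> A" "0 < f a"
    using assms sum_nonpos[of A f] by (metis linorder_not_le zero_less_numeral)
  have "f a \<le> 2" using member_le_sum[of a A f] assms a(1) by simp
  moreover have rest: "sum f (A - {a}) = 2 - f a" using assms a sum.remove[of A a f] by simp
  ultimately consider "f a = 2" | "f a = 1" using a(2) by linarith
  then show ?thesis
  proof cases
    case 1
    then have "sum f (A - {a}) = 0" using rest by simp
    then have "\<forall>b\<in>A - {a}. f b = 0" using assms by (subst (asm) sum_nonneg_eq_0_iff) auto
    then show ?thesis using a(1) 1 by blast
  next
    case 2
    then obtain b where "b \<in> A - {a}" "f b = 1" "\<forall>c\<in>A - {a} - {b}. f c = 0"
      using sum_nonneg_eq_1_cases[of "A - {a}" f] assms rest by auto
    then show ?thesis using a(1) 2 by (metis Diff_iff Diff_insert insert_iff)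
  qed
qed

lemma obtuse_superbase_exchange:
  assumes B: "obtuse_superbase r L B"
    and pos: "\<forall>v\<in>L. v \<noteq> 0 \<longrightarrow> 0 < pair r v v"
    and D: "D \<subseteq> B"
    and N: "finite N" "N \<subseteq> L" "card N = card D" "(\<Sum>v\<in>N. v) = (\<Sum>v\<in>D. v)"
    and D_span: "D \<subseteq> zmod.span ((B - D) \<union> N)"
    and N_rest: "\<forall>n\<in>N. \<forall>k\<in>B - D. pair r n k \<le> 0"
    and N_N: "\<forall>n\<in>N. \<forall>n'\<in>N. n \<noteq> n' \<longrightarrow> pair r n n' \<le> 0"
  shows "obtuse_superbase r L ((B - D) \<union> N)"
proof -
  have fin: "finite B" and ne: "B \<noteq> {}" and rank: "lattice_rank L (card B - 1)"
    and span: "zmod.span B = L" and sum0: "(\<Sum>v\<in>B. v) = 0"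
    and obtuse: "\<forall>u\<in>B. \<forall>v\<in>B. u \<noteq> v \<longrightarrow> pair r u v \<le> 0"
    using B by (simp_all add: obtuse_superbase_iff)
  have finD: "finite D" using D fin by (rule finite_subset)
  \<comment> \<open>a common vector would have nonpositive norm, so it would be the vector \<open>0\<close>\<close>
  have disjoint: "N \<inter> (B - D) = {}"
  proof (rule ccontr)
    assume "N \<inter> (B - D) \<noteq> {}"
    then obtain n where n: "n \<in> N" "n \<in> B" "n \<notin> D" by blast
    have "n = 0" using pos N_rest n N(2) by force
    have "D \<noteq> {}" using n(1) N(1,3) by auto
    then obtain d where "d \<in> D" by blast
    then have "card {n, d} \<le> card B" using n D fin by (intro card_mono) auto
    moreover have "n \<noteq> d" using \<open>d \<in> D\<close> n(3) by blast
    ultimately have "2 \<le> card B" by simp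
    then show False using zero_notin_superbase[OF B] n(2) \<open>n = 0\<close> by blast
  qed
  have card: "card ((B - D) \<union> N) = card B"
    using disjoint fin N(1,3) D card_mono[OF fin D]
    by (simp add: card_Un_disjoint card_Diff_subset[OF finD] Int_commute)
  moreover have "(B - D) \<union> N \<noteq> {}" using card fin ne by force
  moreover have "(\<Sum>v\<in>(B - D) \<union> N. v) = 0"
    using disjoint fin N(1,4) sum.subset_diff[OF D fin, of "\<lambda>v. v"] sum0
    by (simp add: sum.union_disjoint Int_commute add.commute)
  moreover have "zmod.span ((B - D) \<union> N) = L"
  proof -
    have "(B - D) \<union> N \<subseteq> zmod.span B" using N(2) span by (auto intro: zmod.span_base)
    moreover have "B \<subseteq> zmod.span ((B - D) \<union> N)" using D_span by (auto intro: zmod.span_base)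
    ultimately show ?thesis using span zmod.span_eq by blast
  qed
  moreover have "pair r u v \<le> 0" if "u \<in> (B - D) \<union> N" "v \<in> (B - D) \<union> N" "u \<noteq> v" for u v
  proof -
    have "pair r k n \<le> 0" if "n \<in> N" "k \<in> B - D" for n k
      using N_rest that pair_commute[of r k n] by auto
    then show ?thesis using \<open>u \<in> _\<close> \<open>v \<in> _\<close> \<open>u \<noteq> v\<close> obtuse N_rest N_N by blast
  qed
  ultimately show ?thesis
    using fin N(1) rank by (auto simp: obtuse_superbase_iff)
qed

locale superbase_subset_sum =
  fixes r :: nat and L B T :: "(nat \<Rightarrow> int) set" and x :: "nat \<Rightarrow> int"
  assumes superbase: "obtuse_superbase r L B"
    and T_subset: "T \<subseteq> B"
    and x_eq: "x = (\<Sum>v\<in>T. v)"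
begin

lemma finite_B: "finite B"
  using superbase by (simp add: obtuse_superbase_iff)

lemma finite_T: "finite T"
  using finite_subset[OF T_subset finite_B] .

lemma obtuse: "u \<in> B \<Longrightarrow> v \<in> B \<Longrightarrow> u \<noteq> v \<Longrightarrow> pair r u v \<le> 0"
  using superbase by (simp add: obtuse_superbase_iff)

lemma span_B: "zmod.span B = L"
  using superbase by (simp add: obtuse_superbase_iff)

lemma x_in_span: "x \<in> zmod.span B"
  unfolding x_eq using T_subset by (intro zmod.span_sum zmod.span_base) auto

lemma pair_x: "pair r x k = (\<Sum>v\<in>T. pair r v k)"
  unfolding x_eq by (rule pair_sum_left)

lemma pair_x_complement: "pair r x k = - (\<Sum>v\<in>B - T. pair r v k)"
proof -
  have "(\<Sum>v\<in>B. pair r v k) = 0"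
    using superbase pair_sum_left[of r "\<lambda>v. v" B k] by (simp add: obtuse_superbase_iff)
  then show ?thesis
    using sum.subset_diff[OF T_subset finite_B, of "\<lambda>v. pair r v k"] by (simp add: pair_x)
qed

lemma pair_x_nonneg:
  assumes "u \<in> T"
  shows "0 \<le> pair r x u"
proof -
  have "(\<Sum>v\<in>B - T. pair r v u) \<le> 0"
    using assms T_subset obtuse by (intro sum_nonpos) auto
  then show ?thesis by (simp add: pair_x_complement)
qed

lemma pair_x_nonpos: "k \<in> B - T \<Longrightarrow> pair r x k \<le> 0"
  unfolding pair_x using T_subset obtuse by (intro sum_nonpos) auto

lemma sum_pair_x: "(\<Sum>u\<in>T. pair r x u) = pair r x x"
  using pair_sum_right[of r x "\<lambda>v. v" T] by (simp add: x_eq)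

lemma pair_x_le_partial:
  assumes "T' \<subseteq> T" "k \<in> B - T"
  shows "pair r x k \<le> (\<Sum>v\<in>T'. pair r v k)"
proof -
  have "(\<Sum>v\<in>T - T'. pair r v k) \<le> 0"
    using assms T_subset obtuse by (intro sum_nonpos) auto
  then show ?thesis
    using sum.subset_diff[OF assms(1) finite_T, of "\<lambda>v. pair r v k"] by (simp add: pair_x)
qed

lemma pair_outside_zero:
  assumes "u \<in> T" "pair r x u = 0" "k \<in> B - T"
  shows "pair r k u = 0"
proof -
  have nonneg: "\<forall>v\<in>B - T. 0 \<le> - pair r v u" using assms(1) T_subset obtuse by auto
  have "(\<Sum>v\<in>B - T. - pair r v u) = 0" using assms(2) by (simp add: pair_x_complement sum_negf)
  then have "\<forall>v\<in>B - T. - pair r v u = 0"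
    using nonneg finite_B by (subst (asm) sum_nonneg_eq_0_iff) auto
  then show ?thesis using assms(3) by simp
qed

lemma pair_x_partial:
  assumes "T' \<subseteq> T" "\<forall>u\<in>T - T'. pair r x u = 0" "k \<in> B - T"
  shows "pair r x k = (\<Sum>v\<in>T'. pair r v k)"
proof -
  have "pair r v k = 0" if "v \<in> T - T'" for v
    using pair_outside_zero[of v k] assms that pair_commute[of r v k] by auto
  then have "(\<Sum>v\<in>T - T'. pair r v k) = 0" by simp
  then show ?thesis
    using sum.subset_diff[OF assms(1) finite_T, of "\<lambda>v. pair r v k"] by (simp add: pair_x)
qed

lemma unique_partner:
  assumes "u \<in> T" "pair r x u = 1"
  shows "\<exists>p\<in>B - T. pair r p u = -1 \<and> (\<forall>k\<in>B - T - {p}. pair r k u = 0)"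
proof -
  have "\<forall>v\<in>B - T. 0 \<le> - pair r v u" using assms(1) T_subset obtuse by auto
  moreover have "(\<Sum>v\<in>B - T. - pair r v u) = 1" using assms(2) by (simp add: pair_x_complement sum_negf)
  ultimately show ?thesis
    using sum_nonneg_eq_1_cases[of "B - T" "\<lambda>v. - pair r v u"] finite_B by auto
qed

lemma exchange_single:
  assumes pos: "\<forall>v\<in>L. v \<noteq> 0 \<longrightarrow> 0 < pair r v v"
    and xx: "pair r x x = 2"
    and q: "q \<in> T" "pair r x q = 2" and others: "\<forall>u\<in>T - {q}. pair r x u = 0"
    and p: "p \<in> B - T"
  shows "obtuse_superbase r L ((B - {p, q}) \<union> {p + q - x, x})"
proof -
  define m where "m = p + q - x"
  have qB: "q \<in> B" using q T_subset by auto
  have "p \<noteq> q" using p q by auto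
  have outside: "pair r x k = pair r q k" if "k \<in> B - T" for k
    using pair_x_partial[of "{q}" k] q others that by auto
  have x_rest: "pair r x k \<le> 0" if "k \<in> B - {p, q}" for k
    using that others pair_x_nonpos by (cases "k \<in> T") auto
  have m_rest: "pair r m k \<le> 0" if "k \<in> B - {p, q}" for k
  proof (cases "k \<in> T")
    case True
    then show ?thesis
      using that others obtuse[of p k] obtuse[of q k] p qB by (auto simp: m_def pair_add_left pair_diff_left)
  next
    case False
    then show ?thesis
      using that outside obtuse[of p k] p by (auto simp: m_def pair_add_left pair_diff_left)
  qed
  have mx: "pair r m x \<le> 0"
    using pair_x_nonpos[OF p] q(2) xx
    by (simp add: m_def pair_add_left pair_diff_left pair_commute[of r p x] pair_commute[of r q x])
  then have "m \<noteq> x" using xx by auto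
  have "{p, q} \<subseteq> zmod.span ((B - {p, q}) \<union> {m, x})" (is "_ \<subseteq> ?S")
  proof -
    have "x \<in> ?S" "m \<in> ?S" by (auto intro: zmod.span_base)
    have "q = x - (\<Sum>v\<in>T - {q}. v)" using x_eq sum.remove[OF finite_T q(1), of "\<lambda>v. v"] by simp
    also have "\<dots> \<in> ?S"
      using \<open>x \<in> ?S\<close> p T_subset by (intro zmod.span_diff zmod.span_sum zmod.span_base) auto
    finally have "q \<in> ?S" .
    moreover have "p = m - q + x" by (simp add: m_def)
    ultimately have "p \<in> ?S"
      using \<open>x \<in> ?S\<close> \<open>m \<in> ?S\<close> by (simp add: zmod.span_add zmod.span_diff)
    then show ?thesis using \<open>q \<in> ?S\<close> by simp
  qed
  moreover have "m \<in> L"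
    unfolding m_def span_B[symmetric] using p qB x_in_span
    by (intro zmod.span_diff[OF zmod.span_add x_in_span] zmod.span_base) auto
  moreover have "x \<in> L" using x_in_span span_B by simp
  moreover have "(\<Sum>v\<in>{m, x}. v) = (\<Sum>v\<in>{p, q}. v)"
    using \<open>m \<noteq> x\<close> \<open>p \<noteq> q\<close> by (simp add: m_def)
  ultimately show ?thesis
    unfolding m_def[symmetric]
    using \<open>m \<noteq> x\<close> \<open>p \<noteq> q\<close> p qB x_rest m_rest mx pair_commute[of r m x]
    by (intro obtuse_superbase_exchange[OF superbase pos]) auto
qed

lemma exchange_double:
  assumes pos: "\<forall>v\<in>L. v \<noteq> 0 \<longrightarrow> 0 < pair r v v"
    and xx: "pair r x x = 2"
    and q: "q \<in> T" "q' \<in> T" "q \<noteq> q'" "pair r x q = 1" "pair r x q' = 1"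
    and others: "\<forall>u\<in>T - {q, q'}. pair r x u = 0"
    and p: "p \<in> B - T" "pair r p q' = -1" "\<forall>k\<in>B - T - {p}. pair r k q' = 0"
  shows "obtuse_superbase r L ((B - {q, q', p}) \<union> {q - x, p + q', x})"
proof -
  define a where "a = q - x"
  define b where "b = p + q'"
  have qB: "q \<in> B" "q' \<in> B" using q T_subset by auto
  have pq: "p \<noteq> q" "p \<noteq> q'" using p q by auto
  have outside: "pair r x k = pair r q k + pair r q' k" if "k \<in> B - T" for k
    using pair_x_partial[of "{q, q'}" k] q others that by auto
  have xp: "pair r x p = pair r q p - 1"
    using outside[OF p(1)] p(2) pair_commute[of r q' p] by simp
  have x_rest: "pair r x k \<le> 0" if "k \<in> B - {q, q', p}" for k
    using that others pair_x_nonpos by (cases "k \<in> T") auto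
  have a_rest: "pair r a k \<le> 0" if "k \<in> B - {q, q', p}" for k
  proof (cases "k \<in> T")
    case True
    then show ?thesis
      using that others obtuse[of q k] qB by (auto simp: a_def pair_diff_left)
  next
    case False
    then show ?thesis
      using that outside p(3) pair_commute[of r q' k] by (simp add: a_def pair_diff_left)
  qed
  have b_rest: "pair r b k \<le> 0" if "k \<in> B - {q, q', p}" for k
    using that obtuse[of p k] obtuse[of q' k] p qB by (auto simp: b_def pair_add_left)
  have ax: "pair r a x = -1"
    using q(4) xx by (simp add: a_def pair_diff_left pair_commute[of r q x])
  have bx: "pair r b x = pair r q p"
    using xp q(5) by (simp add: b_def pair_add_left pair_commute[of r p x] pair_commute[of r q' x])
  have ab: "pair r a b = pair r q q'"
    using xp q(5) by (simp add: a_def b_def pair_diff_left pair_add_right)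
  have "pair r q p \<le> 0" "pair r q q' \<le> 0" using obtuse qB p q pq by auto
  have "a \<in> L" "b \<in> L" "x \<in> L"
    unfolding a_def b_def span_B[symmetric] using p qB x_in_span
    by (auto intro: zmod.span_diff zmod.span_add zmod.span_base)
  have "a \<noteq> x" "b \<noteq> x" using ax bx xx \<open>pair r q p \<le> 0\<close> by auto
  have "a \<noteq> b"
  proof
    assume "a = b"
    then have "pair r a a \<le> 0" using ab \<open>pair r q q' \<le> 0\<close> by simp
    then have "q = x" using pos \<open>a \<in> L\<close> by (auto simp: a_def)
    then show False using q(4) xx by simp
  qed
  have "{q, q', p} \<subseteq> zmod.span ((B - {q, q', p}) \<union> {a, b, x})" (is "_ \<subseteq> ?S")
  proof -
    have "a \<in> ?S" "b \<in> ?S" "x \<in> ?S" by (auto intro: zmod.span_base)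
    have "q = a + x" by (simp add: a_def)
    then have "q \<in> ?S" using \<open>a \<in> ?S\<close> \<open>x \<in> ?S\<close> zmod.span_add by simp
    have "x = q + (\<Sum>v\<in>T - {q}. v)"
      using x_eq sum.remove[OF finite_T q(1), of "\<lambda>v. v"] by simp
    also have "(\<Sum>v\<in>T - {q}. v) = q' + (\<Sum>v\<in>T - {q} - {q'}. v)"
      using finite_T q by (intro sum.remove) auto
    also have "T - {q} - {q'} = T - {q, q'}" by auto
    finally have "q' = x - q - (\<Sum>v\<in>T - {q, q'}. v)"
      by (simp only: add_diff_cancel_left' add_diff_cancel_right')
    also have "\<dots> \<in> ?S"
      using p T_subset
      by (intro zmod.span_diff[OF zmod.span_diff[OF \<open>x \<in> ?S\<close> \<open>q \<in> ?S\<close>]] zmod.span_sum zmod.span_base)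
        auto
    finally have "q' \<in> ?S" .
    moreover have "p = b - q'" by (simp add: b_def)
    ultimately have "p \<in> ?S" using \<open>b \<in> ?S\<close> by (simp add: zmod.span_diff)
    then show ?thesis using \<open>q \<in> ?S\<close> \<open>q' \<in> ?S\<close> by simp
  qed
  moreover have "(\<Sum>v\<in>{a, b, x}. v) = (\<Sum>v\<in>{q, q', p}. v)"
    using \<open>a \<noteq> b\<close> \<open>a \<noteq> x\<close> \<open>b \<noteq> x\<close> q(3) pq by (simp add: a_def b_def)
  ultimately show ?thesis
    unfolding a_def[symmetric] b_def[symmetric]
    using \<open>a \<in> L\<close> \<open>b \<in> L\<close> \<open>x \<in> L\<close> \<open>a \<noteq> b\<close> \<open>a \<noteq> x\<close> \<open>b \<noteq> x\<close> q(3) pq p qB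
      x_rest a_rest b_rest ax bx ab \<open>pair r q p \<le> 0\<close> \<open>pair r q q' \<le> 0\<close>
      pair_commute[of r a b] pair_commute[of r a x] pair_commute[of r b x]
    by (intro obtuse_superbase_exchange[OF superbase pos]) auto
qed

end

lemma superbase_containing_root:
  assumes B: "obtuse_superbase r L B"
    and min2: "\<forall>v\<in>L. v \<noteq> 0 \<longrightarrow> 2 \<le> pair r v v"
    and x: "x \<in> L" "pair r x x = 2"
    and R: "R \<subseteq> B" "\<forall>y\<in>R. -1 \<le> pair r x y \<and> pair r x y \<le> 0"
    and R_single: "\<exists>y0. \<forall>y\<in>R - {y0}. pair r x y = 0"
  shows "\<exists>B'. obtuse_superbase r L B' \<and> x \<in> B' \<and> R \<subseteq> B'"
proof -
  obtain T where T: "T \<subseteq> B" "x = (\<Sum>v\<in>T. v)"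
    using short_vector_is_subset_sum[OF B min2 x(1)] x(2) by auto
  interpret superbase_subset_sum r L B T x
    using B T by unfold_locales
  have pos: "\<forall>v\<in>L. v \<noteq> 0 \<longrightarrow> 0 < pair r v v" using min2 by force
  obtain y0 where y0: "\<forall>y\<in>R - {y0}. pair r x y = 0" using R_single by blast
  have R_neg_unique: "y = y'" if "y \<in> R" "y' \<in> R" "pair r x y < 0" "pair r x y' < 0" for y y'
  proof -
    have "y = y0" "y' = y0" using y0 that by force+
    then show ?thesis by simp
  qed
  have positive_notin_R: "y \<notin> R" if "0 < pair r x y" for y
    using R that by force
  have "\<forall>u\<in>T. 0 \<le> pair r x u" "(\<Sum>u\<in>T. pair r x u) = 2"
    using pair_x_nonneg sum_pair_x x(2) by auto
  then consider
      (single) q where "q \<in> T" "pair r x q = 2" "\<forall>u\<in>T - {q}. pair r x u = 0"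
    | (double) q q' where "q \<in> T" "q' \<in> T" "q \<noteq> q'" "pair r x q = 1" "pair r x q' = 1"
        "\<forall>u\<in>T - {q, q'}. pair r x u = 0"
    using sum_nonneg_eq_2_cases[OF finite_T] by blast
  then show ?thesis
  proof cases
    case single
    have partner_bound: "pair r x p \<le> pair r p q" if "p \<in> B - T" for p
      using pair_x_le_partial[of "{q}" p] single(1) that pair_commute[of r q p] by simp
    have "\<forall>v\<in>B - T. 0 \<le> - pair r v q" using single(1) T_subset obtuse by auto
    moreover have "(\<Sum>v\<in>B - T. - pair r v q) = 2"
      using single(2) by (simp add: pair_x_complement sum_negf)
    ultimately consider
        (one) p where "p \<in> B - T" "pair r p q = -2"
      | (two) p p' where "p \<in> B - T" "p' \<in> B - T" "p \<noteq> p'" "pair r p q = -1" "pair r p' q = -1"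
      using sum_nonneg_eq_2_cases[of "B - T" "\<lambda>v. - pair r v q"] finite_B by force
    then obtain p where p: "p \<in> B - T" "p \<notin> R"
    proof cases
      case one
      then show ?thesis using that partner_bound[of p] R by force
    next
      case two
      then have "pair r x p < 0" "pair r x p' < 0" using partner_bound by force+
      then show ?thesis using that two R_neg_unique by blast
    qed
    have "obtuse_superbase r L ((B - {p, q}) \<union> {p + q - x, x})"
      by (rule exchange_single[OF pos x(2) single p(1)])
    moreover have "R \<subseteq> (B - {p, q}) \<union> {p + q - x, x}"
      using R(1) p(2) positive_notin_R[of q] single(2) by auto
    ultimately show ?thesis by blast
  next
    case double
    obtain p where p: "p \<in> B - T" "pair r p q = -1" "\<forall>k\<in>B - T - {p}. pair r k q = 0"
      using unique_partner double by blast
    obtain p' where p': "p' \<in> B - T" "pair r p' q' = -1" "\<forall>k\<in>B - T - {p'}. pair r k q' = 0"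
      using unique_partner double by blast
    have notin: "q \<notin> R" "q' \<notin> R" using positive_notin_R double by auto
    have p_bound: "pair r x p \<le> -1"
      using pair_x_le_partial[of "{q}" p] double(1) p pair_commute[of r q p] by simp
    have p'_bound: "pair r x p' \<le> -1"
      using pair_x_le_partial[of "{q'}" p'] double(2) p' pair_commute[of r q' p'] by simp
    consider "p' \<notin> R" | "p \<notin> R" | "p \<in> R" "p' \<in> R" by blast
    then show ?thesis
    proof cases
      case 1
      have "obtuse_superbase r L ((B - {q, q', p'}) \<union> {q - x, p' + q', x})"
        by (rule exchange_double[OF pos x(2) double p'])
      moreover have "R \<subseteq> (B - {q, q', p'}) \<union> {q - x, p' + q', x}"
        using R(1) 1 notin by auto
      ultimately show ?thesis by blast
    next
      case 2
      have "\<forall>u\<in>T - {q', q}. pair r x u = 0" using double(6) by (simp add: insert_commute)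
      then have "obtuse_superbase r L ((B - {q', q, p}) \<union> {q' - x, p + q, x})"
        using double by (intro exchange_double[OF pos x(2) _ _ _ _ _ _ p]) auto
      moreover have "R \<subseteq> (B - {q', q, p}) \<union> {q' - x, p + q, x}"
        using R(1) 2 notin by auto
      ultimately show ?thesis by blast
    next
      case 3
      then have "p = p'" using R_neg_unique p_bound p'_bound by simp
      then have "pair r x p \<le> pair r q p + pair r q' p"
        using pair_x_le_partial[of "{q, q'}" p] double p by simp
      also have "\<dots> = -2" using p p' \<open>p = p'\<close> pair_commute[of r p] by simp
      finally show ?thesis using R 3 by force
    qed
  qed
qed

section \<open>Roots of changemaker lattices\<close>

definition basis_diff :: "nat \<Rightarrow> nat \<Rightarrow> int" where
  "basis_diff k = basis_vec (k - 1) - basis_vec k"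

lemma pair_basis_diff:
  assumes "2 \<le> k" "k \<le> r"
  shows "pair r (basis_diff k) g = g (k - 1) - g k"
proof -
  have "pair r (basis_diff k) g =
      (\<Sum>j=1..r. (if j = k - 1 then g j else 0) - (if j = k then g j else 0))"
    unfolding pair_def by (intro sum.cong) (auto simp: basis_diff_def basis_vec_def)
  also have "\<dots> = g (k - 1) - g k" using assms by (simp add: sum_subtractf) arith
  finally show ?thesis .
qed

lemma basis_diff_in_perp_lattice:
  assumes "2 \<le> k" "k \<le> r" "\<sigma> k = \<sigma> (k - 1)"
  shows "basis_diff k \<in> perp_lattice r \<sigma>"
  using assms pair_basis_diff[OF assms(1,2), of \<sigma>] pair_commute[of r \<sigma>]
  by (auto simp: perp_lattice_def zvec_def basis_diff_def basis_vec_def)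

lemma pair_basis_diff_basis_diff:
  assumes "2 \<le> k" "k \<le> m" "Suc m \<le> r"
  shows "pair r (basis_diff (Suc m)) (basis_diff k) = (if k = m then -1 else 0)"
  using assms by (simp add: pair_basis_diff) (auto simp: basis_diff_def basis_vec_def)

lemma basis_diff_inject:
  assumes "2 \<le> k" "basis_diff k = basis_diff m"
  shows "k = m"
proof -
  have "basis_diff k k = -1" using assms(1) by (simp add: basis_diff_def basis_vec_def)
  then have "basis_diff m k = -1" using assms(2) by simp
  then show ?thesis by (simp add: basis_diff_def basis_vec_def split: if_splits)
qed

lemma pair_basis_diff_self:
  assumes "2 \<le> k" "k \<le> r"
  shows "pair r (basis_diff k) (basis_diff k) = 2"
  using assms by (simp add: pair_basis_diff) (auto simp: basis_diff_def basis_vec_def)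

lemma changemaker_nonzero:
  assumes "changemaker r \<sigma>" "i \<in> {1..r}"
  shows "\<sigma> i \<noteq> 0"
proof -
  have "1 \<le> \<sigma> i" if "1 \<le> i" "i \<le> r" for i
    using that
  proof (induction i rule: nat_induct_at_least)
    case base
    then show ?case using assms(1) by (simp add: changemaker_def)
  next
    case (Suc i)
    then have "Suc i \<in> {2..r}" by simp
    then have "\<sigma> i \<le> \<sigma> (Suc i)" using assms(1) unfolding changemaker_def by fastforce
    then show ?case using Suc by simp
  qed
  then show ?thesis using assms(2) by fastforce
qed

lemma perp_lattice_min_norm:
  assumes \<sigma>: "\<forall>i\<in>{1..r}. \<sigma> i \<noteq> 0" and v: "v \<in> perp_lattice r \<sigma>" "v \<noteq> 0"
  shows "2 \<le> pair r v v"
proof (rule ccontr)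
  assume "\<not> 2 \<le> pair r v v"
  have zv: "zvec r v" and perp: "pair r \<sigma> v = 0" using v by (auto simp: perp_lattice_def)
  obtain i where i: "v i \<noteq> 0" using v(2) by (auto simp: fun_eq_iff)
  then have i_range: "i \<in> {1..r}" using zv by (auto simp: zvec_def)
  have "0 < v i * v i" using i by (auto simp: zero_less_mult_iff linorder_neq_iff)
  then have "1 \<le> v i * v i" by simp
  moreover have "pair r v v = v i * v i + (\<Sum>j\<in>{1..r} - {i}. v j * v j)"
    using i_range by (simp add: pair_def sum.remove)
  moreover have "0 \<le> (\<Sum>j\<in>{1..r} - {i}. v j * v j)" by (simp add: sum_nonneg)
  ultimately have "(\<Sum>j\<in>{1..r} - {i}. v j * v j) = 0" using \<open>\<not> 2 \<le> pair r v v\<close> by linarith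
  then have others: "\<forall>j\<in>{1..r} - {i}. v j = 0" by (subst (asm) sum_nonneg_eq_0_iff) auto
  have "pair r \<sigma> v = \<sigma> i * v i + (\<Sum>j\<in>{1..r} - {i}. \<sigma> j * v j)"
    using i_range by (simp add: pair_def sum.remove)
  also have "\<dots> = \<sigma> i * v i" using others by simp
  finally show False using perp \<sigma> i_range i by simp
qed

lemma superbase_containing_basis_diffs:
  assumes cm: "changemaker r \<sigma>" and B: "obtuse_superbase r (perp_lattice r \<sigma>) B"
  shows "\<exists>B'. obtuse_superbase r (perp_lattice r \<sigma>) B' \<and>
    (\<forall>k\<in>{2..r}. \<sigma> k = \<sigma> (k - 1) \<longrightarrow> basis_diff k \<in> B')"
proof -
  let ?L = "perp_lattice r \<sigma>"
  have min2: "\<forall>v\<in>?L. v \<noteq> 0 \<longrightarrow> 2 \<le> pair r v v"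
    using perp_lattice_min_norm changemaker_nonzero[OF cm] by blast
  have "\<exists>B'. obtuse_superbase r ?L B' \<and>
      (\<forall>k\<in>{2..r}. k \<le> m \<longrightarrow> \<sigma> k = \<sigma> (k - 1) \<longrightarrow> basis_diff k \<in> B')" for m
  proof (induction m)
    case 0
    show ?case using B by auto
  next
    case (Suc m)
    then obtain B where B: "obtuse_superbase r ?L B"
      and placed: "\<forall>k\<in>{2..r}. k \<le> m \<longrightarrow> \<sigma> k = \<sigma> (k - 1) \<longrightarrow> basis_diff k \<in> B"
      by blast
    show ?case
    proof (cases "Suc m \<in> {2..r} \<and> \<sigma> (Suc m) = \<sigma> m")
      case False
      then show ?thesis using B placed by (metis diff_Suc_1 le_Suc_eq)
    next
      case True
      define R where "R = basis_diff ` {k\<in>{2..r}. k \<le> m \<and> \<sigma> k = \<sigma> (k - 1)}"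
      have R_pair: "pair r (basis_diff (Suc m)) y = (if y = basis_diff m then -1 else 0)"
        if "y \<in> R" for y
      proof -
        obtain k where k: "y = basis_diff k" "2 \<le> k" "k \<le> m"
          using \<open>y \<in> R\<close> by (auto simp: R_def)
        have "basis_diff k = basis_diff m \<longleftrightarrow> k = m" using k basis_diff_inject by blast
        then show ?thesis using k True pair_basis_diff_basis_diff[of k m r] by auto
      qed
      have "R \<subseteq> B" using placed by (auto simp: R_def)
      moreover have "basis_diff (Suc m) \<in> ?L" "pair r (basis_diff (Suc m)) (basis_diff (Suc m)) = 2"
        using True basis_diff_in_perp_lattice pair_basis_diff_self by auto
      moreover have "\<forall>y\<in>R. -1 \<le> pair r (basis_diff (Suc m)) y \<and> pair r (basis_diff (Suc m)) y \<le> 0"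
        using R_pair by simp
      moreover have "\<forall>y\<in>R - {basis_diff m}. pair r (basis_diff (Suc m)) y = 0"
        using R_pair by simp
      ultimately obtain B' where B': "obtuse_superbase r ?L B'" "basis_diff (Suc m) \<in> B'" "R \<subseteq> B'"
        using superbase_containing_root[OF B min2] by blast
      have "basis_diff k \<in> B'" if "k \<in> {2..r}" "k \<le> Suc m" "\<sigma> k = \<sigma> (k - 1)" for k
        using that B'(2,3) by (cases "k = Suc m") (auto simp: R_def)
      then show ?thesis using B'(1) by blast
    qed
  qed
  from this[of r] show ?thesis by auto
qed

theorem lemma4p7:
  fixes r :: nat and \<sigma> :: "nat \<Rightarrow> int"
  assumes "changemaker r \<sigma>"
    and "\<sigma> r \<ge> 2"
    and "\<exists>B. obtuse_superbase r (perp_lattice r \<sigma>) B"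
  shows "\<exists>\<pi> B. \<pi> permutes {1..r} \<and> (\<forall>i. \<sigma> (\<pi> i) = \<sigma> i) \<and>
           obtuse_superbase r (perp_lattice r \<sigma>) B \<and>
           (\<forall>k\<in>{2..r}. \<sigma> k = \<sigma> (k - 1) \<longrightarrow>
              (\<lambda>j. - basis_vec (\<pi> k) j + basis_vec (\<pi> (k - 1)) j) \<in> B)"
proof -
  obtain B where "obtuse_superbase r (perp_lattice r \<sigma>) B"
    and "\<forall>k\<in>{2..r}. \<sigma> k = \<sigma> (k - 1) \<longrightarrow> basis_diff k \<in> B"
    using superbase_containing_basis_diffs[OF assms(1)] assms(3) by blast
  moreover have "(\<lambda>j. - basis_vec k j + basis_vec (k - 1) j) = basis_diff k" for k
    by (simp add: basis_diff_def fun_eq_iff)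
  ultimately show ?thesis
    by (intro exI[of _ id] exI[of _ B]) auto
qed

end
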